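(* Let $m\ge 2$ and let $A=(a_{ij})$, $B=(b_{ij})$ be real $m\times m$ matrices with $0\le a_{ij},b_{ij}\le 1$ for all $i,j$, $\det(A)=\det(B)=0$, $AB^T=\mathbf{1}$ (the $m\times m$ all-ones matrix), and such that neither $A$ nor $B$ has all of its rows identical. Let $V:S^{m-1}\to S^{m-1}$ be given by $(V(x))_k=\big(\sum_{i=1}^m a_{ik}x_i\big)\big(\sum_{j=1}^m b_{jk}x_j\big)$, $k=1,\dots,m$. Let $C=(c_{ij})$ be a real $m\times m$ matrix with $c_{ij}\ge 0$ for all $i,j$, and for $k=1,\dots,m$ let $c^{(k)}=(c_{1k},c_{2k},\dots,c_{mk})^T$; suppose that for every $k=1,\dots,m$ either $Ac^{(k)}\le c^{(k)}$ or $Bc^{(k)}\le c^{(k)}$ (componentwise). Then for any $p_1,\dots,p_m\in\mathbb{R}^+$ the function $$\phi(x)=\prod_{k=1}^m\Big(\sum_{i=1}^m c_{ik}x_i\Big)^{p_k}$$ is a Lyapunov function for $V$, i.e. $\lim_{n\to\infty}\phi(x^{(n)})$ exists for every $x^{(0)}\in S^{m-1}$, where $x^{(n+1)}=V(x^{(n)})$.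
   Context: $S^{m-1}=\{x\in\mathbb{R}^m: x_i\ge 0,\ \sum_i x_i=1\}$. A continuous function $\phi:S^{m-1}\to\mathbb{R}$ is a Lyapunov function for $V$ if $\lim_{n\to\infty}\phi(x^{(n)})$ exists for every initial point $x^{(0)}\in S^{m-1}$ with $x^{(n+1)}=V(x^{(n)})$. *)

theory Defs
  imports "HOL-Analysis.Analysis"
begin

definition std_simplex :: "(real^'m) set" where
  "std_simplex = {x. (\<forall>i. 0 \<le> x $ i) \<and> (\<Sum>i\<in>UNIV. x $ i) = 1}"

definition lyapunov_fun :: "('a::topological_space \<Rightarrow> real) \<Rightarrow> ('a \<Rightarrow> 'a) \<Rightarrow> 'a set \<Rightarrow> bool" where
  "lyapunov_fun \<phi> V S \<longleftrightarrow>
     continuous_on S \<phi> \<and> (\<forall>x0\<in>S. convergent (\<lambda>n. \<phi> ((V ^^ n) x0)))"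

end

theory Submission
  imports Defs
begin

text \<open>Since \<open>AB\<^sup>T\<close> is the all-ones matrix, \<open>V\<close> maps the simplex into itself,
  and on the simplex both factors of \<open>(V x)\<^sub>k\<close> lie in \<open>[0, 1]\<close>. Dropping the \<open>B\<close>-factor gives
  \<open>V x \<bullet> c \<le> (x v* A) \<bullet> c = x \<bullet> Ac \<le> x \<bullet> c\<close> whenever \<open>Ac \<le> c\<close> and \<open>c \<ge> 0\<close>, and symmetrically
  for \<open>B\<close>. Hence each linear form, and therefore \<open>\<phi>\<close>, is nonincreasing along orbits; being
  nonnegative, \<open>\<phi>\<close> converges along every orbit.\<close>

lemma std_simplexD:
  assumes "x \<in> std_simplex"
  shows "0 \<le> x $ i" and "(\<Sum>i\<in>UNIV. x $ i) = 1"
  using assms by (auto simp: std_simplex_def)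

lemma lyapunov_funI_nonincreasing:
  fixes \<phi> :: "'a::topological_space \<Rightarrow> real"
  assumes "continuous_on S \<phi>" and "\<And>x. x \<in> S \<Longrightarrow> V x \<in> S"
    and "\<And>x. x \<in> S \<Longrightarrow> b \<le> \<phi> x" and "\<And>x. x \<in> S \<Longrightarrow> \<phi> (V x) \<le> \<phi> x"
  shows "lyapunov_fun \<phi> V S"
  unfolding lyapunov_fun_def
proof (intro conjI ballI)
  fix x0 assume "x0 \<in> S"
  then have orbit: "(V ^^ n) x0 \<in> S" for n
    by (induction n) (simp_all add: assms(2))
  have "decseq (\<lambda>n. \<phi> ((V ^^ n) x0))"
    by (rule decseq_SucI) (simp add: assms(4) orbit)
  then obtain L where "(\<lambda>n. \<phi> ((V ^^ n) x0)) \<longlonglongrightarrow> L"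
    by (rule decseq_convergent) (use assms(3) orbit in blast)
  then show "convergent (\<lambda>n. \<phi> ((V ^^ n) x0))"
    by (rule convergentI)
qed (fact assms(1))

definition quadratic_operator :: "real^'m^'m \<Rightarrow> real^'m^'m \<Rightarrow> real^'m \<Rightarrow> real^'m" where
  "quadratic_operator A B x = (\<chi> k. (x v* A) $ k * (x v* B) $ k)"

lemma quadratic_operator_commute: "quadratic_operator A B = quadratic_operator B A"
  by (auto simp: quadratic_operator_def mult.commute)

lemma vector_matrix_mult_std_simplex_bounds:
  fixes M :: "real^'m^'m"
  assumes "x \<in> std_simplex" and "\<forall>i j. 0 \<le> M $ i $ j \<and> M $ i $ j \<le> 1"
  shows "0 \<le> (x v* M) $ k" and "(x v* M) $ k \<le> 1"
proof -
  have "(x v* M) $ k = (\<Sum>i\<in>UNIV. x $ i * M $ i $ k)"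
    by (simp add: vector_matrix_mult_def)
  moreover have "(\<Sum>i\<in>UNIV. x $ i * M $ i $ k) \<le> (\<Sum>i\<in>UNIV. x $ i)"
    by (rule sum_mono) (use assms std_simplexD(1)[OF assms(1)] in \<open>simp add: mult_left_le\<close>)
  moreover have "0 \<le> (\<Sum>i\<in>UNIV. x $ i * M $ i $ k)"
    by (rule sum_nonneg) (use assms std_simplexD(1)[OF assms(1)] in simp)
  ultimately show "0 \<le> (x v* M) $ k" and "(x v* M) $ k \<le> 1"
    using std_simplexD(2)[OF assms(1)] by simp_all
qed

lemma sum_quadratic_operator:
  fixes A B :: "real^'m^'m"
  assumes "A ** transpose B = (\<chi> i j. 1)"
  shows "(\<Sum>k\<in>UNIV. quadratic_operator A B x $ k) = (\<Sum>i\<in>UNIV. x $ i)\<^sup>2"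
proof -
  have "(\<Sum>k\<in>UNIV. quadratic_operator A B x $ k) = (x v* A) \<bullet> (x v* B)"
    by (simp add: quadratic_operator_def inner_vec_def)
  also have "\<dots> = x \<bullet> ((A ** transpose B) *v x)"
    by (simp add: dot_lmul_matrix matrix_vector_mul_assoc[symmetric])
  also have "\<dots> = (\<Sum>i\<in>UNIV. x $ i)\<^sup>2"
    by (simp add: assms inner_vec_def matrix_vector_mult_def power2_eq_square sum_distrib_right)
  finally show ?thesis .
qed

lemma quadratic_operator_std_simplex:
  fixes A B :: "real^'m^'m"
  assumes "x \<in> std_simplex" and "A ** transpose B = (\<chi> i j. 1)"
    and "\<forall>i j. 0 \<le> A $ i $ j \<and> A $ i $ j \<le> 1" and "\<forall>i j. 0 \<le> B $ i $ j \<and> B $ i $ j \<le> 1"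
  shows "quadratic_operator A B x \<in> std_simplex"
  using vector_matrix_mult_std_simplex_bounds(1)[OF assms(1) assms(3)]
    vector_matrix_mult_std_simplex_bounds(1)[OF assms(1) assms(4)]
    sum_quadratic_operator[OF assms(2)] std_simplexD(2)[OF assms(1)]
  by (simp add: std_simplex_def quadratic_operator_def)

lemma inner_quadratic_operator_le:
  fixes A B :: "real^'m^'m"
  assumes x: "x \<in> std_simplex"
    and "\<forall>i j. 0 \<le> A $ i $ j \<and> A $ i $ j \<le> 1" and "\<forall>i j. 0 \<le> B $ i $ j \<and> B $ i $ j \<le> 1"
    and c: "\<forall>i. 0 \<le> c $ i" and Ac: "\<forall>i. (A *v c) $ i \<le> c $ i"
  shows "quadratic_operator A B x \<bullet> c \<le> x \<bullet> c"
proof -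
  have "quadratic_operator A B x \<bullet> c = (\<Sum>k\<in>UNIV. (x v* A) $ k * (x v* B) $ k * c $ k)"
    by (simp add: quadratic_operator_def inner_vec_def)
  also have "\<dots> \<le> (\<Sum>k\<in>UNIV. (x v* A) $ k * c $ k)"
    using vector_matrix_mult_std_simplex_bounds[OF x assms(2)]
      vector_matrix_mult_std_simplex_bounds[OF x assms(3)] c
    by (intro sum_mono mult_right_mono mult_left_le) auto
  also have "\<dots> = (x v* A) \<bullet> c"
    by (simp add: inner_vec_def)
  also have "\<dots> = x \<bullet> (A *v c)"
    by (rule dot_lmul_matrix)
  also have "\<dots> \<le> x \<bullet> c"
    using std_simplexD(1)[OF x] Ac
    by (simp add: inner_vec_def sum_mono mult_left_mono)
  finally show ?thesis .
qed

theorem corollary3p2: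
  fixes A B C :: "real^'m^'m" and p :: "real^'m" and V :: "real^'m \<Rightarrow> real^'m"
  assumes "CARD('m) \<ge> 2"
    and "\<forall>i j. 0 \<le> A $ i $ j \<and> A $ i $ j \<le> 1"
    and "\<forall>i j. 0 \<le> B $ i $ j \<and> B $ i $ j \<le> 1"
    and "det A = 0" and "det B = 0"
    and "A ** transpose B = (\<chi> i j. 1)"
    and "\<exists>i j. row i A \<noteq> row j A"
    and "\<exists>i j. row i B \<noteq> row j B"
    and "\<forall>x. V x = (\<chi> k. (\<Sum>i\<in>UNIV. A $ i $ k * x $ i) * (\<Sum>j\<in>UNIV. B $ j $ k * x $ j))"
    and "\<forall>i j. 0 \<le> C $ i $ j"
    and "\<forall>k. (\<forall>i. (A *v column k C) $ i \<le> column k C $ i)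
             \<or> (\<forall>i. (B *v column k C) $ i \<le> column k C $ i)"
    and "\<forall>k. 0 < p $ k"
  shows "lyapunov_fun (\<lambda>x. \<Prod>k\<in>UNIV. (\<Sum>i\<in>UNIV. C $ i $ k * x $ i) powr (p $ k)) V std_simplex"
proof -
  have V: "V = quadratic_operator A B"
    using assms(9) by (auto simp: quadratic_operator_def vector_matrix_mult_def mult.commute)
  have linear_form: "(\<Sum>i\<in>UNIV. C $ i $ k * x $ i) = x \<bullet> column k C" for x k
    by (simp add: inner_vec_def column_def mult.commute)
  have form_nonneg: "0 \<le> x \<bullet> column k C" if "x \<in> std_simplex" for x k
    using assms(10) std_simplexD(1)[OF that] by (simp add: inner_vec_def column_def sum_nonneg)
  have form_decreasing: "V x \<bullet> column k C \<le> x \<bullet> column k C" if "x \<in> std_simplex" for x k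
  proof -
    have "\<forall>i. 0 \<le> column k C $ i"
      using assms(10) by (simp add: column_def)
    with assms(11)[rule_format, of k] show ?thesis
      using inner_quadratic_operator_le[OF that assms(2,3)]
        inner_quadratic_operator_le[OF that assms(3,2)]
      unfolding V quadratic_operator_commute[of B A] by blast
  qed
  have V_simplex: "V x \<in> std_simplex" if "x \<in> std_simplex" for x
    unfolding V by (rule quadratic_operator_std_simplex[OF that assms(6,2,3)])
  show ?thesis
    unfolding linear_form
  proof (rule lyapunov_funI_nonincreasing[where b = 0])
    show "continuous_on std_simplex (\<lambda>x. \<Prod>k\<in>UNIV. (x \<bullet> column k C) powr p $ k)"
      using assms(12) form_nonneg by (intro continuous_intros continuous_on_powr') auto
    show "(\<Prod>k\<in>UNIV. (V x \<bullet> column k C) powr p $ k) \<le> (\<Prod>k\<in>UNIV. (x \<bullet> column k C) powr p $ k)"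
      if "x \<in> std_simplex" for x
      using that V_simplex form_nonneg form_decreasing assms(12)
      by (intro prod_mono conjI powr_mono2) (auto intro: less_imp_le)
  qed (use V_simplex in \<open>auto intro: prod_nonneg\<close>)
qed

end
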